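(* Let $\mathbf b=b_0b_1b_2\cdots$ be any infinite sequence over $\{1,-1\}$ and let $\mathbf f=f_1f_2f_3\cdots$ be the paper-folding word defined by $\mathbf b$. Then for every positive integer $m$ the word $\mathbf f$ contains an abelian $m$-power.
   Context: The paper-folding word $\mathbf f=f_1f_2f_3\cdots$ over $\{1,-1\}$ defined by a sequence of instructions $\mathbf b=b_0b_1b_2\cdots\in\{1,-1\}^{\mathbb N}$ is given by $f_i=(-1)^j b_k$, where $i=2^k(2j+1)$ with $k,j\ge 0$. A word $w$ is an abelian $m$-power if $w=w_1w_2\cdots w_m$ where for all $i,j\in\{1,\dots,m\}$ the word $w_j$ is obtained from $w_i$ by a permutation of its letters (i.e. $|w_i|_a=|w_j|_a$ for each letter $a$, where $|u|_a$ is the number of occurrences of $a$ in $u$). The word $\mathbf f$ contains an abelian $m$-power if some nonempty factor $f_if_{i+1}\cdots f_j$ with $0<i\le j$ is an abelian $m$-power. *)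

theory Defs
  imports Main
begin

text \<open>Paper-folding word defined by instructions b: for i = 2^k (2j+1), f_i = (-1)^j b_k.
  Index 0 is unused (the word is f_1 f_2 f_3 ...).\<close>
definition paperfold :: "(nat \<Rightarrow> int) \<Rightarrow> nat \<Rightarrow> int" where
  "paperfold b i = (THE v. \<exists>k j. i = 2^k * (2*j+1) \<and> v = (-1)^j * b k)"

definition abelian_power :: "nat \<Rightarrow> 'a list \<Rightarrow> bool" where
  "abelian_power m w = (\<exists>ws. length ws = m \<and> concat ws = w \<and>
      (\<forall>u\<in>set ws. \<forall>v\<in>set ws. \<forall>a. count_list u a = count_list v a))"

end

theory Submission
  imports Defs "HOL-Library.Infinite_Set"
begin

text \<open>
  Write S n = f_1 + ... + f_n. As f takes the values 1 and -1, it suffices to find n and L > 0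
  with S (n + t L) = S n for all t <= m: the m blocks of length L following position n then
  have sum 0, hence equally many letters 1 and -1.

  Separating odd and even positions gives S (2^(k+1) q + r) = S r + b_k [q odd] + S' q for
  r < 2^k, where S' belongs to the instructions shifted by k + 1. Together with
  f'_1 + f'_2 = -(f'_6 + f'_7) this yields S (t + 2h) - S t = S (t + 5h) - S (t + 7h) for
  h = 2^(k+1) and t < 2^k, and likewise with all arguments multiplied by a power of two.

  By pigeonhole there are scales k_0 < k_1 < ..., pairwise far apart, at which b shows the same
  window. For n_t = sum_c 2^(k_c+1) (w_c + t) the prefix sum splits over the scales, each
  contributing S (2^(k_0+1) (w_c + t)). The offsets w_c run through [0, 2h) and [5h, 7h), so
  increasing t by one telescopes both runs to the identity above: S (n_t) does not depend on
  t <= m.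
\<close>

lemma pow2_mult_odd_inject:
  fixes k j k' j' :: nat
  assumes "2^k * (2*j+1) = 2^k' * (2*j'+1)"
  shows "k = k' \<and> j = j'"
  using assms
proof (induction k arbitrary: k')
  case 0
  then show ?case
    by (cases k') (auto, presburger)
next
  case (Suc k)
  show ?case
  proof (cases k')
    case 0
    with Suc.prems show ?thesis by (auto, presburger)
  next
    case (Suc k'')
    with Suc.prems Suc.IH[of k''] show ?thesis by simp
  qed
qed

lemma pow2_mult_odd_exists:
  assumes "0 < (i::nat)"
  obtains k j where "i = 2^k * (2*j+1)"
  using assms
proof (induction i arbitrary: thesis rule: less_induct)
  case (less i)
  show ?case
  proof (cases "even i")
    case True
    then obtain i' where i: "i = 2*i'" by blast
    with less.prems have "0 < i'" "i' < i" by auto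
    with less.IH obtain k j where "i' = 2^k * (2*j+1)" by blast
    with i less.prems(1)[of "Suc k" j] show ?thesis by simp
  next
    case False
    then obtain j where "i = 2*j+1" using oddE by blast
    with less.prems(1)[of 0 j] show ?thesis by simp
  qed
qed

lemma paperfold_pow2_mult_odd: "paperfold b (2^k * (2*j+1)) = (-1)^j * b k"
  unfolding paperfold_def
  by (rule the_equality) (use pow2_mult_odd_inject in blast)+

lemma paperfold_odd: "paperfold b (2*j+1) = (-1)^j * b 0"
  using paperfold_pow2_mult_odd[of b 0 j] by simp

lemma paperfold_double:
  assumes "0 < i"
  shows "paperfold b (2*i) = paperfold (\<lambda>n. b (Suc n)) i"
proof -
  obtain k j where i: "i = 2^k * (2*j+1)" using pow2_mult_odd_exists assms by blast
  then have "2*i = 2^Suc k * (2*j+1)" by simp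
  then show ?thesis unfolding i by (simp only: paperfold_pow2_mult_odd)
qed

lemma paperfold_cong:
  assumes "0 < i" "\<And>k. 2^k \<le> i \<Longrightarrow> b k = c k"
  shows "paperfold b i = paperfold c i"
proof -
  obtain k j where i: "i = 2^k * (2*j+1)" using pow2_mult_odd_exists assms(1) by blast
  have "b k = c k" by (rule assms(2)) (simp add: i)
  then show ?thesis unfolding i paperfold_pow2_mult_odd by simp
qed

lemma paperfold_in_pm1:
  assumes "range b \<subseteq> {1, -1}" "0 < i"
  shows "paperfold b i \<in> {1, -1}"
proof -
  obtain k j where i: "i = 2^k * (2*j+1)" using pow2_mult_odd_exists assms(2) by blast
  show ?thesis unfolding i paperfold_pow2_mult_odd using assms(1)
    by (cases "even j") auto
qed

fun prefix_sum :: "(nat \<Rightarrow> 'a::comm_monoid_add) \<Rightarrow> nat \<Rightarrow> 'a" where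
  "prefix_sum f 0 = 0"
| "prefix_sum f (Suc n) = prefix_sum f n + f (Suc n)"

lemma prefix_sum_cong:
  "(\<And>i. 0 < i \<Longrightarrow> i \<le> n \<Longrightarrow> f i = g i) \<Longrightarrow> prefix_sum f n = prefix_sum g n"
  by (induction n) auto

lemma sum_list_map_upt_prefix_sum:
  fixes f :: "nat \<Rightarrow> 'a::ab_group_add"
  shows "a \<le> c \<Longrightarrow> sum_list (map f [Suc a..<Suc c]) = prefix_sum f c - prefix_sum f a"
  by (induction c) (auto simp: le_Suc_eq)

text \<open>The odd positions \<open>1, 3, 5, \<dots>\<close> carry \<open>b 0, -b 0, b 0, \<dots>\<close>, and there are
  \<open>(m + 1) div 2\<close> of them up to \<open>m\<close>; the even positions carry the word folded by the
  shifted instructions.\<close>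
lemma prefix_sum_paperfold_halve:
  "prefix_sum (paperfold b) m =
     b 0 * of_bool (odd ((m + 1) div 2)) + prefix_sum (paperfold (\<lambda>i. b (Suc i))) (m div 2)"
proof (induction m)
  case 0
  then show ?case by simp
next
  case (Suc m)
  show ?case
  proof (cases "even m")
    case True
    then obtain n where m: "m = 2*n" by blast
    have "paperfold b (Suc m) = (-1)^n * b 0" using paperfold_odd[of b n] m by simp
    with Suc.IH m show ?thesis by (cases "even n") auto
  next
    case False
    then obtain n where m: "m = 2*n + 1" using oddE by blast
    have "paperfold b (Suc m) = paperfold (\<lambda>i. b (Suc i)) (Suc n)"
      using paperfold_double[of "Suc n" b] m by simp
    with Suc.IH m show ?thesis by simp
  qed
qed

lemma prefix_sum_paperfold_scale:
  assumes "r < 2^k"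
  shows "prefix_sum (paperfold b) (2^Suc k * q + r) =
     prefix_sum (paperfold b) r + b k * of_bool (odd q)
     + prefix_sum (paperfold (\<lambda>i. b (Suc k + i))) q"
  using assms
proof (induction k arbitrary: b r)
  case 0
  then show ?case using prefix_sum_paperfold_halve[of b "2*q"] by simp
next
  case (Suc k)
  have halves: "(2^Suc (Suc k) * q + r) div 2 = 2^Suc k * q + r div 2"
    "(2^Suc (Suc k) * q + r + 1) div 2 = 2 * (2^k * q) + (r + 1) div 2"
    by simp_all
  have "r div 2 < 2^k" using Suc.prems by simp
  from Suc.IH[OF this, of "\<lambda>i. b (Suc i)"] show ?case
    using prefix_sum_paperfold_halve[of b "2^Suc (Suc k) * q + r"]
      prefix_sum_paperfold_halve[of b r]
    by (simp only: halves) simp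
qed

lemma prefix_sum_paperfold_2_and_7:
  "prefix_sum (paperfold b) 2 = b 0 + b 1"
  "prefix_sum (paperfold b) 7 - prefix_sum (paperfold b) 5 = - b 0 - b 1"
proof -
  have "paperfold b 1 = b 0" using paperfold_odd[of b 0] by simp
  moreover have "paperfold b 2 = b 1"
    using paperfold_double[of 1 b] paperfold_odd[of _ 0] by simp
  ultimately show "prefix_sum (paperfold b) 2 = b 0 + b 1"
    by (simp add: numeral_2_eq_2)
  have "paperfold b 6 = - b 1"
    using paperfold_double[of 3 b] paperfold_odd[of _ 1] by simp
  moreover have "paperfold b 7 = - b 0" using paperfold_odd[of b 3] by simp
  ultimately show "prefix_sum (paperfold b) 7 - prefix_sum (paperfold b) 5 = - b 0 - b 1"
    by (simp add: numeral_eq_Suc)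
qed

lemma prefix_sum_paperfold_cancel:
  assumes "t < 2^k"
  shows "prefix_sum (paperfold b) (t + 2 * 2^Suc k) - prefix_sum (paperfold b) t
    + (prefix_sum (paperfold b) (t + 7 * 2^Suc k) - prefix_sum (paperfold b) (t + 5 * 2^Suc k))
    = 0"
proof -
  define c where "c = (\<lambda>i. b (Suc k + i))"
  have scale: "prefix_sum (paperfold b) (t + q * 2^Suc k)
      = prefix_sum (paperfold b) t + b k * of_bool (odd q) + prefix_sum (paperfold c) q" for q
    using prefix_sum_paperfold_scale[OF assms, of b q] unfolding c_def
    by (simp add: add.commute mult.commute)
  show ?thesis
    unfolding scale using prefix_sum_paperfold_2_and_7[of c] by simp
qed

lemma prefix_sum_paperfold_cancel_scaled:
  assumes "t < 2^k"
  shows "prefix_sum (paperfold b) (2^K * (t + 2 * 2^Suc k)) - prefix_sum (paperfold b) (2^K * t)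
    + (prefix_sum (paperfold b) (2^K * (t + 7 * 2^Suc k))
       - prefix_sum (paperfold b) (2^K * (t + 5 * 2^Suc k)))
    = 0"
proof (cases K)
  case 0
  then show ?thesis using prefix_sum_paperfold_cancel[OF assms] by simp
next
  case (Suc j)
  have "prefix_sum (paperfold b) (2^K * x) =
      b j * of_bool (odd x) + prefix_sum (paperfold (\<lambda>i. b (Suc j + i))) x" for x
    using prefix_sum_paperfold_scale[of 0 j b x] Suc by simp
  then show ?thesis
    using prefix_sum_paperfold_cancel[OF assms, of "\<lambda>i. b (Suc j + i)"] by simp
qed

lemma sum_separated_scales_less:
  fixes x :: "nat \<Rightarrow> nat"
  assumes "\<And>c. Suc (k c) + X \<le> k (Suc c)" "\<And>c. c < N \<Longrightarrow> x c < 2^X"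
  shows "(\<Sum>c<N. 2^Suc (k c) * x c) < 2^k N"
  using assms(2)
proof (induction N)
  case 0
  then show ?case by simp
next
  case (Suc N)
  have "(\<Sum>c<Suc N. 2^Suc (k c) * x c) < 2^k N + 2^Suc (k N) * x N"
    using Suc by simp
  also have "\<dots> \<le> 2^Suc (k N) * (x N + 1)" by simp
  also have "\<dots> \<le> 2^Suc (k N) * 2^X" using Suc.prems[of N] by (intro mult_le_mono2) simp
  also have "\<dots> = 2^(Suc (k N) + X)" by (simp add: power_add)
  also have "\<dots> \<le> 2^k (Suc N)" using assms(1)[of N] by (intro power_increasing) auto
  finally show ?case .
qed

lemma prefix_sum_paperfold_separated_scales:
  fixes x :: "nat \<Rightarrow> nat"
  assumes "\<And>c. Suc (k c) + X \<le> k (Suc c)" "\<And>c. c < N \<Longrightarrow> x c < 2^X"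
  shows "prefix_sum (paperfold b) (\<Sum>c<N. 2^Suc (k c) * x c)
    = (\<Sum>c<N. prefix_sum (paperfold b) (2^Suc (k c) * x c))"
  using assms(2)
proof (induction N)
  case 0
  then show ?case by simp
next
  case (Suc N)
  have "(\<Sum>c<N. 2^Suc (k c) * x c) < 2^k N"
    using sum_separated_scales_less[of k X N x, OF assms(1)] Suc.prems by simp
  from prefix_sum_paperfold_scale[OF this, of b "x N"]
    prefix_sum_paperfold_scale[of 0 "k N" b "x N"]
  show ?case using Suc by (simp add: add.commute)
qed

lemma prefix_sum_paperfold_window_cong:
  assumes "\<And>i. i \<le> X \<Longrightarrow> b (k + i) = b (k' + i)" "x < 2^X"
  shows "prefix_sum (paperfold b) (2^Suc k * x) = prefix_sum (paperfold b) (2^Suc k' * x)"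
proof -
  have "prefix_sum (paperfold (\<lambda>j. b (Suc k + j))) x = prefix_sum (paperfold (\<lambda>j. b (Suc k' + j))) x"
  proof (intro prefix_sum_cong paperfold_cong)
    fix i j assume "i \<le> x" "2^j \<le> i"
    with assms(2) have "(2::nat)^j < 2^X" by linarith
    then have "j < X" by simp
    then show "b (Suc k + j) = b (Suc k' + j)" using assms(1)[of "Suc j"] by simp
  qed
  then show ?thesis
    using prefix_sum_paperfold_scale[of 0 k b x] prefix_sum_paperfold_scale[of 0 k' b x]
      assms(1)[of 0] by simp
qed

lemma prefix_sum_paperfold_recurrent_scales:
  fixes x :: "nat \<Rightarrow> nat"
  assumes "\<And>c. Suc (k c) + X \<le> k (Suc c)" "\<And>c i. i \<le> X \<Longrightarrow> b (k c + i) = b (k 0 + i)"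
    and "\<And>c. c < N \<Longrightarrow> x c < 2^X"
  shows "prefix_sum (paperfold b) (\<Sum>c<N. 2^Suc (k c) * x c)
    = (\<Sum>c<N. prefix_sum (paperfold b) (2^Suc (k 0) * x c))"
proof -
  have "prefix_sum (paperfold b) (\<Sum>c<N. 2^Suc (k c) * x c)
      = (\<Sum>c<N. prefix_sum (paperfold b) (2^Suc (k c) * x c))"
    using assms(1,3) by (rule prefix_sum_paperfold_separated_scales)
  also have "\<dots> = (\<Sum>c<N. prefix_sum (paperfold b) (2^Suc (k 0) * x c))"
  proof (rule sum.cong[OF refl], rule prefix_sum_paperfold_window_cong[where X = X])
    show "b (k c + i) = b (k 0 + i)" if "i \<le> X" for c i using that by (rule assms(2))
    show "x c < 2^X" if "c \<in> {..<N}" for c using that assms(3) by simp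
  qed
  finally show ?thesis .
qed

lemma sum_lessThan_shift_telescope:
  fixes F :: "nat \<Rightarrow> 'a::ab_group_add"
  shows "(\<Sum>c<d. F (a + c + Suc t)) = (\<Sum>c<d. F (a + c + t)) + F (a + d + t) - F (a + t)"
proof -
  have "(\<Sum>c<d. F (a + c + Suc t)) - (\<Sum>c<d. F (a + c + t))
      = (\<Sum>c<d. F (a + Suc c + t) - F (a + c + t))"
    by (simp add: sum_subtractf)
  also have "\<dots> = F (a + d + t) - F (a + t)"
    using sum_lessThan_telescope[of "\<lambda>c. F (a + c + t)" d] by simp
  finally show ?thesis by (simp add: algebra_simps)
qed

lemma sum_lessThan_add_split:
  fixes a d :: nat
  shows "(\<Sum>c<a + d. f c) = (\<Sum>c<a. f c) + (\<Sum>c<d. f (a + c))"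
  by (induction d) (simp_all add: add_ac)

lemma prefix_sum_paperfold_gapped_runs_shift:
  assumes "t < 2^k"
  defines "h \<equiv> 2^Suc k"
  defines "w \<equiv> \<lambda>c. if c < 2*h then c else c + 3*h"
  shows "(\<Sum>c<4*h. prefix_sum (paperfold b) (2^K * (w c + Suc t)))
    = (\<Sum>c<4*h. prefix_sum (paperfold b) (2^K * (w c + t)))"
proof -
  define F where "F x = prefix_sum (paperfold b) (2^K * x)" for x
  have runs: "(\<Sum>c<4*h. F (w c + s)) = (\<Sum>c<2*h. F (0 + c + s)) + (\<Sum>c<2*h. F (5*h + c + s))"
    for s
  proof -
    have "(\<Sum>c<4*h. F (w c + s)) = (\<Sum>c<2*h + 2*h. F (w c + s))" by simp
    also have "\<dots> = (\<Sum>c<2*h. F (w c + s)) + (\<Sum>c<2*h. F (w (2*h + c) + s))"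
      by (rule sum_lessThan_add_split)
    also have "(\<Sum>c<2*h. F (w c + s)) = (\<Sum>c<2*h. F (0 + c + s))"
      by (rule sum.cong) (simp_all add: w_def)
    also have "(\<Sum>c<2*h. F (w (2*h + c) + s)) = (\<Sum>c<2*h. F (5*h + c + s))"
      by (rule sum.cong) (simp_all add: w_def add_ac)
    finally show ?thesis .
  qed
  have "F (t + 2 * 2^Suc k) - F t + (F (t + 7 * 2^Suc k) - F (t + 5 * 2^Suc k)) = 0"
    using prefix_sum_paperfold_cancel_scaled[OF assms(1), of b K] unfolding F_def .
  moreover have "0 + 2*h + t = t + 2 * 2^Suc k" "5*h + 2*h + t = t + 7 * 2^Suc k"
    "5*h + t = t + 5 * 2^Suc k" unfolding h_def by simp_all
  ultimately have "(\<Sum>c<2*h. F (0 + c + Suc t)) + (\<Sum>c<2*h. F (5*h + c + Suc t))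
      = (\<Sum>c<2*h. F (0 + c + t)) + (\<Sum>c<2*h. F (5*h + c + t))"
    using sum_lessThan_shift_telescope[of F 0 t "2*h"]
      sum_lessThan_shift_telescope[of F "5*h" t "2*h"]
    by (simp only:) simp
  then have "(\<Sum>c<4*h. F (w c + Suc t)) = (\<Sum>c<4*h. F (w c + t))" unfolding runs .
  then show ?thesis unfolding F_def .
qed

lemma finite_range_windows:
  "finite (range b) \<Longrightarrow> finite (range (\<lambda>p. map (\<lambda>i. b (p + i)) [0..<n]))"
  by (rule finite_subset[OF _ finite_lists_length_eq[of "range b" n]]) auto

lemma finite_range_spaced_recurrence:
  fixes P :: "nat \<Rightarrow> 'a"
  assumes "finite (range P)"
  obtains k :: "nat \<Rightarrow> nat" where "\<And>c. k c + d \<le> k (Suc c)" "\<And>c. P (k c) = P (k 0)"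
proof -
  have "finite (range (\<lambda>i. P (d * i)))"
    using assms by (rule finite_subset[rotated]) auto
  from pigeonhole_infinite[OF infinite_UNIV_nat this]
  obtain a where "infinite {i. P (d * i) = P (d * a)}" by auto
  moreover define I where "I = {i. P (d * i) = P (d * a)}"
  ultimately have I: "infinite I" by simp
  show thesis
  proof
    fix c
    show "d * enumerate I c + d \<le> d * enumerate I (Suc c)"
      using mult_le_mono2[OF Suc_leI[OF enumerate_step[OF I]], of d] by (simp add: add.commute)
    show "P (d * enumerate I c) = P (d * enumerate I 0)"
      using enumerate_in_set[OF I, of c] enumerate_in_set[OF I, of 0] unfolding I_def by simp
  qed
qed

lemma count_list_pm1_eq:
  fixes u v :: "int list"
  assumes "set u \<subseteq> {1, -1}" "set v \<subseteq> {1, -1}"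
    and "length u = length v" "sum_list u = sum_list v"
  shows "count_list u a = count_list v a"
proof -
  have plus: "2 * int (count_list w 1) = int (length w) + sum_list w"
    and minus: "2 * int (count_list w (-1)) = int (length w) - sum_list w"
    and other: "a \<notin> {1, -1} \<Longrightarrow> count_list w a = 0"
    if "set w \<subseteq> {1, -1::int}" for w
    using that by (induction w) auto
  consider "a = 1" | "a = -1" | "a \<notin> {1, -1}" by blast
  then show ?thesis
    using plus[OF assms(1)] plus[OF assms(2)] minus[OF assms(1)] minus[OF assms(2)]
      other[OF assms(1)] other[OF assms(2)] assms(3,4)
    by cases auto
qed

lemma concat_map_upt_blocks:
  "concat (map (\<lambda>t. [a + t*L..<a + Suc t * L]) [0..<m]) = [a..<a + m*L]"
proof (induction m)
  case 0
  then show ?case by simp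
next
  case (Suc m)
  then show ?case using upt_add_eq_append[of "a + m*L" "a + m*L" L] upt_add_eq_append[of a "a + m*L" L]
    by (simp add: algebra_simps)
qed

lemma abelian_power_of_prefix_sum_progression:
  fixes f :: "nat \<Rightarrow> int"
  assumes "\<And>i. 0 < i \<Longrightarrow> f i \<in> {1, -1}"
    and "\<And>t. t \<le> m \<Longrightarrow> prefix_sum f (n + t * L) = prefix_sum f n"
  shows "abelian_power m (map f [Suc n..<Suc (n + m * L)])"
  unfolding abelian_power_def
proof (intro exI conjI ballI allI)
  define ws where "ws = map (\<lambda>t. map f [Suc n + t*L..<Suc n + Suc t * L]) [0..<m]"
  show "length ws = m" by (simp add: ws_def)
  have "concat ws = map f (concat (map (\<lambda>t. [Suc n + t*L..<Suc n + Suc t * L]) [0..<m]))"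
    unfolding ws_def by (simp add: map_concat comp_def del: upt_Suc)
  then show "concat ws = map f [Suc n..<Suc (n + m * L)]"
    by (simp only: concat_map_upt_blocks) simp
  have block: "set u \<subseteq> {1, -1} \<and> length u = L \<and> sum_list u = 0" if u: "u \<in> set ws" for u
  proof -
    obtain t where t: "t < m" "u = map f [Suc (n + t*L)..<Suc (n + Suc t * L)]"
      using u unfolding ws_def by (auto simp del: upt_Suc)
    have "sum_list u = prefix_sum f (n + Suc t * L) - prefix_sum f (n + t * L)"
      unfolding t(2) by (rule sum_list_map_upt_prefix_sum) simp
    also have "\<dots> = 0" using assms(2)[of t] assms(2)[of "Suc t"] t(1) by simp
    moreover have "set u \<subseteq> {1, -1}"
      unfolding t(2) set_map set_upt by (rule image_subsetI, rule assms(1)) simp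
    ultimately show ?thesis using t(2) by simp
  qed
  fix u v a assume "u \<in> set ws" "v \<in> set ws"
  with block show "count_list u a = count_list v a"
    by (intro count_list_pm1_eq) auto
qed

lemma prefix_sum_paperfold_gapped_progression_const:
  assumes gap: "\<And>c. Suc (k c) + (m + 4) \<le> k (Suc c)"
    and window: "\<And>c i. i \<le> m + 4 \<Longrightarrow> b (k c + i) = b (k 0 + i)"
    and "t \<le> m"
  defines "h \<equiv> 2^Suc m"
  defines "w \<equiv> \<lambda>c. if c < 2*h then c else c + 3*h"
  shows "prefix_sum (paperfold b) (\<Sum>c<4*h. 2^Suc (k c) * (w c + t))
    = prefix_sum (paperfold b) (\<Sum>c<4*h. 2^Suc (k c) * w c)"
proof -
  define G where "G s = (\<Sum>c<4*h. prefix_sum (paperfold b) (2^Suc (k 0) * (w c + s)))" for s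
  have m_less: "m < 2^m" by (rule less_exp)
  have w_less: "w c + s < 2^(m + 4)" if "c < 4*h" "s \<le> m" for c s
  proof -
    have "w c < 14 * 2^m" using that(1) unfolding w_def h_def by auto
    moreover have "(2::nat)^(m + 4) = 16 * 2^m" by (simp add: power_add)
    ultimately show ?thesis using that(2) m_less by linarith
  qed
  have prefix_sum_G: "prefix_sum (paperfold b) (\<Sum>c<4*h. 2^Suc (k c) * (w c + s)) = G s"
    if "s \<le> m" for s
    unfolding G_def using gap window w_less[OF _ that]
    by (rule prefix_sum_paperfold_recurrent_scales)
  have G_Suc: "G (Suc s) = G s" if "s < m" for s
  proof -
    have "s < 2^m" using that m_less by linarith
    from prefix_sum_paperfold_gapped_runs_shift[OF this, of b "Suc (k 0)"]
    show ?thesis unfolding G_def w_def h_def .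
  qed
  have "G t = G 0" using \<open>t \<le> m\<close>
    by (induction t) (simp_all add: G_Suc)
  then show ?thesis using prefix_sum_G[of t] prefix_sum_G[of 0] \<open>t \<le> m\<close> by simp
qed

lemma paperfold_prefix_sum_constant_progression:
  assumes "finite (range b)"
  obtains n L where "0 < L"
    "\<And>t. t \<le> m \<Longrightarrow> prefix_sum (paperfold b) (n + t * L) = prefix_sum (paperfold b) n"
proof -
  obtain k where gap: "\<And>c. k c + (m + 5) \<le> k (Suc c)"
    and window: "\<And>c. map (\<lambda>i. b (k c + i)) [0..<m + 5] = map (\<lambda>i. b (k 0 + i)) [0..<m + 5]"
    using finite_range_spaced_recurrence[OF finite_range_windows[OF assms]] by metis
  define h where "h = (2::nat)^Suc m"
  define w where "w c = (if c < 2*h then c else c + 3*h)" for c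
  define L where "L = (\<Sum>c<4*h. (2::nat)^Suc (k c))"
  define n where "n = (\<Sum>c<4*h. 2^Suc (k c) * w c)"
  show thesis
  proof
    show "0 < L" unfolding L_def h_def by (rule sum_pos) (auto simp: lessThan_empty_iff)
    fix t assume "t \<le> m"
    have "n + t * L = (\<Sum>c<4*h. 2^Suc (k c) * (w c + t))"
      unfolding n_def L_def by (simp add: algebra_simps sum.distrib sum_distrib_left)
    also have "prefix_sum (paperfold b) \<dots> = prefix_sum (paperfold b) n"
      unfolding n_def h_def w_def
    proof (rule prefix_sum_paperfold_gapped_progression_const[OF _ _ \<open>t \<le> m\<close>])
      show "Suc (k c) + (m + 4) \<le> k (Suc c)" for c using gap[of c] by simp
      show "b (k c + i) = b (k 0 + i)" if "i \<le> m + 4" for c i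
        using window[of c] that by (simp del: upt_Suc)
    qed
    finally show "prefix_sum (paperfold b) (n + t * L) = prefix_sum (paperfold b) n" .
  qed
qed

theorem theorem5p4:
  fixes b :: "nat \<Rightarrow> int" and m :: nat
  assumes "\<And>n. b n = 1 \<or> b n = -1"
    and "0 < m"
  shows "\<exists>i j. 0 < i \<and> i \<le> j \<and> abelian_power m (map (paperfold b) [i..<Suc j])"
proof -
  have pm1: "range b \<subseteq> {1, -1}" using assms(1) by auto
  then have "finite (range b)" by (rule finite_subset) simp
  then obtain n L where "0 < L" and const:
    "\<And>t. t \<le> m \<Longrightarrow> prefix_sum (paperfold b) (n + t * L) = prefix_sum (paperfold b) n"
    using paperfold_prefix_sum_constant_progression[where m = m] by blast
  have "abelian_power m (map (paperfold b) [Suc n..<Suc (n + m * L)])"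
    using paperfold_in_pm1[OF pm1] const by (rule abelian_power_of_prefix_sum_progression)
  moreover have "Suc n \<le> n + m * L" using \<open>0 < L\<close> assms(2) by simp
  ultimately show ?thesis by blast
qed

end
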